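(* Let $G$ be a graph, let $q\ge k$ be integers, and let $X\subseteq Y\subseteq T\subseteq V(G)$. If $X$ is $(q,k)$-unbreakable in $G$ and no vertex of $Y$ is $(X,T,q+k)$-carvable, then $Y$ is $(q+k,k)$-unbreakable in $G$.
   Context: A vertex cut of $G$ is an ordered pair $(L,R)$ with $L\cup R=V(G)$, $L\setminus R,R\setminus L\ne\emptyset$ and no edge between $L\setminus R$ and $R\setminus L$; its size is $|L\cap R|$. A set $Z$ is $(q,k)$-unbreakable in $G$ if every vertex cut of size at most $k$ has $|L\cap Z|\le q$ or $|R\cap Z|\le q$. The torso $H_T$ of $T$ in $G$ is the graph with vertex set $T$ and an edge $\{u,v\}$ ($u,v\in T$) whenever $\{u,v\}\in E(G)$ or $u,v\in N_G(D)$ for some connected component $D$ of $G\setminus T$. For $X\subseteq T$ and an integer $k'$, an $(X,T,k')$-witness is a vertex cut $(L,R)$ of $G$ with $|L\cap R|\le k'$, $|L\cap T|>|L\cap R|$, and $X\subseteq R$; it is connected if $H_T[(L\setminus R)\cap T]$ is connected. A vertex $v$ is $(X,T,k')$-carvable if there is a connected $(X,T,k')$-witness $(L,R)$ with $v\in L\setminus R$. *)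

theory Defs
  imports Main
begin

definition graph :: "'a set \<Rightarrow> 'a set set \<Rightarrow> bool" where
  "graph V E \<longleftrightarrow> finite V \<and> (\<forall>e\<in>E. e \<subseteq> V \<and> card e = 2)"

definition adj_in :: "'a set set \<Rightarrow> 'a set \<Rightarrow> 'a \<Rightarrow> 'a \<Rightarrow> bool" where
  "adj_in E S u v \<longleftrightarrow> u \<in> S \<and> v \<in> S \<and> {u, v} \<in> E"

definition connected_set :: "'a set set \<Rightarrow> 'a set \<Rightarrow> bool" where
  "connected_set E S \<longleftrightarrow> S \<noteq> {} \<and> (\<forall>u\<in>S. \<forall>v\<in>S. (adj_in E S)\<^sup>*\<^sup>* u v)"

definition component :: "'a set set \<Rightarrow> 'a set \<Rightarrow> 'a set \<Rightarrow> bool" where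
  "component E S D \<longleftrightarrow> D \<subseteq> S \<and> connected_set E D \<and>
     (\<forall>D'. D \<subseteq> D' \<and> D' \<subseteq> S \<and> connected_set E D' \<longrightarrow> D' = D)"

definition neighbourhood :: "'a set set \<Rightarrow> 'a set \<Rightarrow> 'a set" where
  "neighbourhood E D = {u. u \<notin> D \<and> (\<exists>v\<in>D. {u, v} \<in> E)}"

definition vertex_cut :: "'a set \<Rightarrow> 'a set set \<Rightarrow> 'a set \<Rightarrow> 'a set \<Rightarrow> bool" where
  "vertex_cut V E L R \<longleftrightarrow> L \<union> R = V \<and> L - R \<noteq> {} \<and> R - L \<noteq> {} \<and>
     (\<forall>u\<in>L - R. \<forall>v\<in>R - L. {u, v} \<notin> E)"

definition unbreakable :: "'a set \<Rightarrow> 'a set set \<Rightarrow> int \<Rightarrow> int \<Rightarrow> 'a set \<Rightarrow> bool" where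
  "unbreakable V E q k Z \<longleftrightarrow>
     (\<forall>L R. vertex_cut V E L R \<and> int (card (L \<inter> R)) \<le> k \<longrightarrow>
        int (card (L \<inter> Z)) \<le> q \<or> int (card (R \<inter> Z)) \<le> q)"

definition torso_edges :: "'a set \<Rightarrow> 'a set set \<Rightarrow> 'a set \<Rightarrow> 'a set set" where
  "torso_edges V E T = {{u, v} | u v. u \<in> T \<and> v \<in> T \<and> u \<noteq> v \<and>
     ({u, v} \<in> E \<or> (\<exists>D. component E (V - T) D \<and> u \<in> neighbourhood E D \<and> v \<in> neighbourhood E D))}"

definition witness :: "'a set \<Rightarrow> 'a set set \<Rightarrow> 'a set \<Rightarrow> 'a set \<Rightarrow> int \<Rightarrow> 'a set \<Rightarrow> 'a set \<Rightarrow> bool" where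
  "witness V E X T k' L R \<longleftrightarrow> vertex_cut V E L R \<and> int (card (L \<inter> R)) \<le> k' \<and>
     card (L \<inter> T) > card (L \<inter> R) \<and> X \<subseteq> R"

definition connected_witness :: "'a set \<Rightarrow> 'a set set \<Rightarrow> 'a set \<Rightarrow> 'a set \<Rightarrow> int \<Rightarrow> 'a set \<Rightarrow> 'a set \<Rightarrow> bool" where
  "connected_witness V E X T k' L R \<longleftrightarrow> witness V E X T k' L R \<and>
     connected_set (torso_edges V E T) ((L - R) \<inter> T)"

definition carvable :: "'a set \<Rightarrow> 'a set set \<Rightarrow> 'a set \<Rightarrow> 'a set \<Rightarrow> int \<Rightarrow> 'a \<Rightarrow> bool" where
  "carvable V E X T k' v \<longleftrightarrow> (\<exists>L R. connected_witness V E X T k' L R \<and> v \<in> L - R)"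

end

theory Submission
  imports Defs
begin

text \<open>Suppose a cut (L,R) of order at most k had more than q+k vertices of Y on each side. By
  unbreakability of X one side, say L, contains at most q vertices of X; moving them into the
  separator yields a cut (L,R') of order at most q+k with X \<subseteq> R' in which L - R' holds more
  vertices of Y than the separator holds non-terminals. Some component C of G restricted to
  (L - R') together with the non-terminals of the separator keeps this excess. Its part
  K inside L - R' has all neighbours in the separator, so (K \<union> N(K), V - K) is a witness, and it is
  connected because paths of C through non-terminals become torso edges. Hence the vertices of Y in K
  are carvable.\<close>

definition component_of :: "'a set set \<Rightarrow> 'a set \<Rightarrow> 'a \<Rightarrow> 'a set" where
  "component_of E S x = {v. (adj_in E S)\<^sup>*\<^sup>* x v}"

lemma adj_in_sym: "adj_in E S u v \<Longrightarrow> adj_in E S v u"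
  unfolding adj_in_def by (simp add: insert_commute)

lemma reachable_sym: "(adj_in E S)\<^sup>*\<^sup>* u v \<Longrightarrow> (adj_in E S)\<^sup>*\<^sup>* v u"
  by (metis adj_in_sym symp_def symp_rtranclp sympD)

lemma reachable_mono: "S \<subseteq> S' \<Longrightarrow> (adj_in E S)\<^sup>*\<^sup>* u v \<Longrightarrow> (adj_in E S')\<^sup>*\<^sup>* u v"
  by (rule mono_rtranclp[rule_format]) (auto simp: adj_in_def)

lemma reachable_mem: "(adj_in E S)\<^sup>*\<^sup>* u v \<Longrightarrow> u \<in> S \<Longrightarrow> v \<in> S"
  by (induction rule: rtranclp.induct) (auto simp: adj_in_def)

lemma self_in_component_of: "x \<in> component_of E S x"
  by (simp add: component_of_def)

lemma component_of_subset: "x \<in> S \<Longrightarrow> component_of E S x \<subseteq> S"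
  unfolding component_of_def using reachable_mem by fast

lemma component_of_eq: "y \<in> component_of E S x \<Longrightarrow> component_of E S y = component_of E S x"
  unfolding component_of_def by (auto intro: rtranclp_trans reachable_sym)

lemma reachable_within_component_of:
  "(adj_in E S)\<^sup>*\<^sup>* x v \<Longrightarrow> (adj_in E (component_of E S x))\<^sup>*\<^sup>* x v"
proof (induction rule: rtranclp_induct)
  case (step u v)
  then have "u \<in> component_of E S x" "v \<in> component_of E S x"
    by (auto simp: component_of_def intro: rtranclp.rtrancl_into_rtrancl)
  with step.hyps(2) have "adj_in E (component_of E S x) u v"
    by (simp add: adj_in_def)
  with step.IH show ?case by (rule rtranclp.rtrancl_into_rtrancl)
qed simp

lemma reachable_in_component_of:
  assumes "a \<in> component_of E S x" and "b \<in> component_of E S x"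
  shows "(adj_in E (component_of E S x))\<^sup>*\<^sup>* a b"
proof -
  have "(adj_in E S)\<^sup>*\<^sup>* x a" "(adj_in E S)\<^sup>*\<^sup>* x b"
    using assms by (simp_all add: component_of_def)
  then have "(adj_in E (component_of E S x))\<^sup>*\<^sup>* x a" "(adj_in E (component_of E S x))\<^sup>*\<^sup>* x b"
    by (simp_all add: reachable_within_component_of)
  then show ?thesis by (meson reachable_sym rtranclp_trans)
qed

lemma component_component_of:
  assumes "x \<in> S"
  shows "component E S (component_of E S x)"
  unfolding component_def
proof (intro conjI allI impI)
  show "component_of E S x \<subseteq> S" using assms by (rule component_of_subset)
  show "connected_set E (component_of E S x)"
    unfolding connected_set_def
  proof (intro conjI ballI)
    show "component_of E S x \<noteq> {}" using self_in_component_of by fast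
  qed (rule reachable_in_component_of)
next
  fix D assume D: "component_of E S x \<subseteq> D \<and> D \<subseteq> S \<and> connected_set E D"
  have "x \<in> D" using D self_in_component_of by fast
  then have "(adj_in E D)\<^sup>*\<^sup>* x v" if "v \<in> D" for v
    using D that unfolding connected_set_def by blast
  then have "(adj_in E S)\<^sup>*\<^sup>* x v" if "v \<in> D" for v
    using D that by (metis reachable_mono)
  then have "D \<subseteq> component_of E S x"
    by (auto simp: component_of_def)
  with D show "D = component_of E S x" by blast
qed

lemma neighbourhood_component_of:
  assumes "x \<in> S" and "K \<subseteq> component_of E S x"
  shows "neighbourhood E K \<inter> S \<subseteq> component_of E S x"
proof
  fix u assume u: "u \<in> neighbourhood E K \<inter> S"
  then obtain v where "v \<in> K" "{u, v} \<in> E" unfolding neighbourhood_def by auto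
  with assms u component_of_subset[OF assms(1)] have "(adj_in E S)\<^sup>*\<^sup>* x v" "adj_in E S v u"
    by (auto simp: component_of_def adj_in_def insert_commute)
  then show "u \<in> component_of E S x"
    unfolding component_of_def by (auto intro: rtranclp.rtrancl_into_rtrancl)
qed

lemma card_eq_sum_components:
  assumes "finite W" and "B \<subseteq> W"
  shows "card B = (\<Sum>C\<in>component_of E W ` W. card (C \<inter> B))"
proof -
  have "finite B" using assms by (rule rev_finite_subset)
  have "B = (\<Union>C\<in>component_of E W ` W. C \<inter> B)"
  proof
    show "B \<subseteq> (\<Union>C\<in>component_of E W ` W. C \<inter> B)"
    proof
      fix b assume "b \<in> B"
      with assms(2) self_in_component_of[of b E W]
      show "b \<in> (\<Union>C\<in>component_of E W ` W. C \<inter> B)" by blast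
    qed
  qed blast
  also have "card \<dots> = (\<Sum>C\<in>component_of E W ` W. card (C \<inter> B))"
  proof (rule card_UN_disjoint)
    show "finite (component_of E W ` W)" using assms(1) by simp
    show "\<forall>C\<in>component_of E W ` W. finite (C \<inter> B)" using \<open>finite B\<close> by simp
    show "\<forall>C\<in>component_of E W ` W. \<forall>C'\<in>component_of E W ` W. C \<noteq> C' \<longrightarrow> C \<inter> B \<inter> (C' \<inter> B) = {}"
    proof (intro ballI impI)
      fix C C' assume "C \<in> component_of E W ` W" "C' \<in> component_of E W ` W" "C \<noteq> C'"
      then obtain a a' where C: "C = component_of E W a" and C': "C' = component_of E W a'" by blast
      have "C \<inter> C' = {}"
      proof (rule ccontr)
        assume "C \<inter> C' \<noteq> {}"
        then obtain z where "z \<in> C" "z \<in> C'" by blast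
        then have "C = C'" unfolding C C' by (metis component_of_eq)
        with \<open>C \<noteq> C'\<close> show False by contradiction
      qed
      then show "C \<inter> B \<inter> (C' \<inter> B) = {}" by blast
    qed
  qed
  finally show ?thesis .
qed

lemma component_of_with_excess:
  assumes "finite W" and "A \<subseteq> W" and "B \<subseteq> W" and "card B < card A"
  obtains x where "x \<in> W" and "card (component_of E W x \<inter> B) < card (component_of E W x \<inter> A)"
proof -
  have "\<exists>x\<in>W. card (component_of E W x \<inter> B) < card (component_of E W x \<inter> A)"
  proof (rule ccontr)
    assume "\<not> ?thesis"
    then have "card (C \<inter> A) \<le> card (C \<inter> B)" if "C \<in> component_of E W ` W" for C
      using that by (auto simp: not_less)
    then have "(\<Sum>C\<in>component_of E W ` W. card (C \<inter> A)) \<le> (\<Sum>C\<in>component_of E W ` W. card (C \<inter> B))"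
      by (rule sum_mono)
    with assms(4) show False
      unfolding card_eq_sum_components[OF assms(1,2), of E, symmetric]
        card_eq_sum_components[OF assms(1,3), of E, symmetric] by simp
  qed
  with that show ?thesis by blast
qed

lemma graph_edge: "graph V E \<Longrightarrow> {u, v} \<in> E \<Longrightarrow> u \<in> V \<and> v \<in> V \<and> u \<noteq> v"
  unfolding graph_def by fastforce

lemma edge_in_torso_edges:
  "graph V E \<Longrightarrow> {u, v} \<in> E \<Longrightarrow> u \<in> T \<Longrightarrow> v \<in> T \<Longrightarrow> {u, v} \<in> torso_edges V E T"
  unfolding torso_edges_def by (blast dest: graph_edge)

lemma torso_edge_via_outside_path:
  assumes g: "graph V E" and "t \<in> T" and "u \<in> T" and "t \<noteq> u"
    and tw: "{t, w} \<in> E" and "w \<notin> T" and wv: "(adj_in E (V - T))\<^sup>*\<^sup>* w v" and vu: "{v, u} \<in> E"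
  shows "{t, u} \<in> torso_edges V E T"
proof -
  define D where "D = component_of E (V - T) w"
  have "w \<in> V - T" using graph_edge[OF g tw] \<open>w \<notin> T\<close> by auto
  then have D: "component E (V - T) D" and "D \<subseteq> V - T"
    unfolding D_def by (simp_all add: component_component_of component_of_subset)
  moreover have "w \<in> D" "v \<in> D"
    using wv unfolding D_def component_of_def by auto
  ultimately have "t \<in> neighbourhood E D" "u \<in> neighbourhood E D"
    using \<open>t \<in> T\<close> \<open>u \<in> T\<close> tw vu by (auto simp: neighbourhood_def insert_commute)
  with D show ?thesis
    unfolding torso_edges_def using \<open>t \<in> T\<close> \<open>u \<in> T\<close> \<open>t \<noteq> u\<close> by blast
qed

lemma torso_reachable:
  assumes g: "graph V E" and ab: "(adj_in E Q)\<^sup>*\<^sup>* a b" and "a \<in> T" and "b \<in> T"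
  shows "(adj_in (torso_edges V E T) (Q \<inter> T))\<^sup>*\<^sup>* a b"
proof -
  let ?torso_path = "(adj_in (torso_edges V E T) (Q \<inter> T))\<^sup>*\<^sup>*"
  \<comment> \<open>t is the last vertex of T on the path; the part after it runs in G - T.\<close>
  have "(b \<in> T \<longrightarrow> ?torso_path a b) \<and>
    (b \<notin> T \<longrightarrow> (\<exists>t w. t \<in> Q \<inter> T \<and> ?torso_path a t \<and> {t, w} \<in> E \<and> w \<notin> T \<and>
                        (adj_in E (V - T))\<^sup>*\<^sup>* w b))"
    using ab
  proof (induction rule: rtranclp_induct)
    case base
    then show ?case using \<open>a \<in> T\<close> by simp
  next
    case (step v v')
    have e: "{v, v'} \<in> E" "v \<in> Q" "v' \<in> Q" using step.hyps(2) unfolding adj_in_def by auto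
    show ?case
    proof (cases "v \<in> T")
      case True
      then have path_v: "?torso_path a v" using step.IH by simp
      show ?thesis
      proof (cases "v' \<in> T")
        case True
        with \<open>v \<in> T\<close> e have "adj_in (torso_edges V E T) (Q \<inter> T) v v'"
          using edge_in_torso_edges[OF g e(1)] by (simp add: adj_in_def)
        with path_v True show ?thesis by simp
      next
        case False
        with \<open>v \<in> T\<close> path_v e show ?thesis by blast
      qed
    next
      case False
      then obtain t w where tw: "t \<in> Q \<inter> T" "?torso_path a t" "{t, w} \<in> E" "w \<notin> T"
        "(adj_in E (V - T))\<^sup>*\<^sup>* w v"
        using step.IH by blast
      have "adj_in E (V - T) v v'" if "v' \<notin> T"
        using False that graph_edge[OF g e(1)] e(1) by (simp add: adj_in_def)
      moreover have "?torso_path a v'" if "v' \<in> T"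
      proof (cases "t = v'")
        case False
        with tw that have "{t, v'} \<in> torso_edges V E T"
          using torso_edge_via_outside_path[OF g _ _ _ _ _ _ e(1)] by blast
        with tw(1,2) e that show ?thesis
          by (meson IntI adj_in_def rtranclp.rtrancl_into_rtrancl)
      qed (use tw in simp)
      ultimately show ?thesis
        using tw by (meson rtranclp.rtrancl_into_rtrancl)
    qed
  qed
  with \<open>b \<in> T\<close> show ?thesis by simp
qed

lemma connected_torso_component_of:
  assumes g: "graph V E" and "component_of E W x \<inter> T \<noteq> {}"
  shows "connected_set (torso_edges V E T) (component_of E W x \<inter> T)"
  unfolding connected_set_def
proof (intro conjI ballI)
  fix a b assume "a \<in> component_of E W x \<inter> T" "b \<in> component_of E W x \<inter> T"
  then show "(adj_in (torso_edges V E T) (component_of E W x \<inter> T))\<^sup>*\<^sup>* a b"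
    using torso_reachable[OF g reachable_in_component_of] by blast
qed (rule assms(2))

lemma vertex_cut_swap: "vertex_cut V E L R \<Longrightarrow> vertex_cut V E R L"
  unfolding vertex_cut_def by (metis insert_commute sup_commute)

lemma neighbourhood_subset: "graph V E \<Longrightarrow> neighbourhood E K \<subseteq> V"
  unfolding neighbourhood_def by (blast dest: graph_edge)

lemma neighbourhood_disjoint: "neighbourhood E K \<inter> K = {}"
  unfolding neighbourhood_def by blast

lemma vertex_cut_neighbourhood:
  assumes g: "graph V E" and "K \<subseteq> V" and "K \<noteq> {}" and "\<not> V \<subseteq> K \<union> neighbourhood E K"
  shows "vertex_cut V E (K \<union> neighbourhood E K) (V - K)"
  unfolding vertex_cut_def
proof (intro conjI ballI notI)
  fix u v assume u: "u \<in> K \<union> neighbourhood E K - (V - K)"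
    and v: "v \<in> V - K - (K \<union> neighbourhood E K)" and "{u, v} \<in> E"
  have "u \<in> K" using u neighbourhood_subset[OF g, of K] by blast
  with v \<open>{u, v} \<in> E\<close> show False
    unfolding neighbourhood_def by (auto simp: insert_commute)
qed (use assms neighbourhood_subset[OF g, of K] in auto)

lemma card_lt_card_Un_Int:
  assumes "finite K" and "finite N" and "K \<inter> N = {}" and "card (N - T) < card (K \<inter> T)"
  shows "card N < card ((K \<union> N) \<inter> T)"
proof -
  have "card N = card (N \<inter> T) + card (N - T)"
    using assms(2) by (rule card_Int_Diff)
  also have "\<dots> < card (K \<inter> T) + card (N \<inter> T)"
    using assms(4) by simp
  also have "\<dots> = card ((K \<union> N) \<inter> T)"
    using assms(1-3) by (simp add: Int_Un_distrib2 card_Un_disjoint disjoint_iff)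
  finally show ?thesis .
qed

lemma carvable_of_neighbourhood_cut:
  assumes g: "graph V E" and "K \<subseteq> V" and "y \<in> K" and "\<not> V \<subseteq> K \<union> neighbourhood E K"
    and "X \<subseteq> V - K" and "int (card (neighbourhood E K)) \<le> k'"
    and "card (neighbourhood E K - T) < card (K \<inter> T)"
    and "connected_set (torso_edges V E T) (K \<inter> T)"
  shows "carvable V E X T k' y"
proof -
  let ?N = "neighbourhood E K"
  have finV: "finite V" using g by (simp add: graph_def)
  have sep: "(K \<union> ?N) \<inter> (V - K) = ?N" and side: "(K \<union> ?N) - (V - K) = K"
    using assms(2) neighbourhood_subset[OF g, of K] neighbourhood_disjoint[of E K] by auto
  have "vertex_cut V E (K \<union> ?N) (V - K)"
    using vertex_cut_neighbourhood[OF g] assms(2-4) by blast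
  moreover have "card ?N < card ((K \<union> ?N) \<inter> T)"
    using assms(2,7) finV neighbourhood_subset[OF g, of K] neighbourhood_disjoint[of E K]
    by (intro card_lt_card_Un_Int) (auto intro: finite_subset)
  ultimately have "connected_witness V E X T k' (K \<union> ?N) (V - K)"
    unfolding connected_witness_def witness_def sep side using assms(5,6,8) by blast
  with side \<open>y \<in> K\<close> show ?thesis
    unfolding carvable_def by blast
qed

lemma neighbourhood_component_of_cut_side:
  assumes g: "graph V E" and cut: "vertex_cut V E L R" and "L - R \<subseteq> W" and "x \<in> W"
  shows "neighbourhood E (component_of E W x \<inter> (L - R)) \<subseteq> L \<inter> R"
proof
  let ?K = "component_of E W x \<inter> (L - R)"
  fix u assume u: "u \<in> neighbourhood E ?K"
  then obtain v where "v \<in> L - R" "{u, v} \<in> E" unfolding neighbourhood_def by auto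
  with cut have "u \<in> L"
    using neighbourhood_subset[OF g] u unfolding vertex_cut_def by (fastforce simp: insert_commute)
  moreover have "u \<notin> L - R"
    using u assms(3) neighbourhood_component_of[OF assms(4), of ?K] neighbourhood_disjoint[of E ?K]
    by blast
  ultimately show "u \<in> L \<inter> R" by blast
qed

lemma component_with_excess_in_cut_side:
  assumes g: "graph V E" and "Y \<subseteq> T" and cut: "vertex_cut V E L R"
    and excess: "card ((L \<inter> R) - T) < card ((L - R) \<inter> Y)"
  obtains K where "K \<subseteq> L - R" and "K \<inter> Y \<noteq> {}" and "neighbourhood E K \<subseteq> L \<inter> R"
    and "card (neighbourhood E K - T) < card (K \<inter> T)"
    and "connected_set (torso_edges V E T) (K \<inter> T)"
proof -
  define W where "W = (L - R) \<union> ((L \<inter> R) - T)"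
  have "W \<subseteq> V" using cut unfolding W_def vertex_cut_def by blast
  with g have "finite W" unfolding graph_def by (blast intro: finite_subset)
  then obtain x where "x \<in> W"
    and more: "card (component_of E W x \<inter> ((L \<inter> R) - T)) < card (component_of E W x \<inter> ((L - R) \<inter> Y))"
    using component_of_with_excess[of W "(L - R) \<inter> Y" "(L \<inter> R) - T"] excess unfolding W_def by auto
  define C where "C = component_of E W x"
  define K where "K = C \<inter> (L - R)"
  have "finite C"
    using \<open>finite W\<close> component_of_subset[OF \<open>x \<in> W\<close>] unfolding C_def by (rule finite_subset[rotated])
  have NS: "neighbourhood E K \<subseteq> L \<inter> R"
    unfolding K_def C_def using neighbourhood_component_of_cut_side[OF g cut _ \<open>x \<in> W\<close>] W_def by blast
  then have "neighbourhood E K - T \<subseteq> C \<inter> ((L \<inter> R) - T)"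
    using neighbourhood_component_of[OF \<open>x \<in> W\<close>, of K] unfolding K_def C_def W_def by blast
  moreover have "C \<inter> ((L - R) \<inter> Y) \<subseteq> K \<inter> T"
    using \<open>Y \<subseteq> T\<close> unfolding K_def by blast
  ultimately have "card (neighbourhood E K - T) \<le> card (C \<inter> ((L \<inter> R) - T))"
    and "card (C \<inter> ((L - R) \<inter> Y)) \<le> card (K \<inter> T)"
    using \<open>finite C\<close> by (simp_all add: card_mono K_def)
  with more[folded C_def] have "card (neighbourhood E K - T) < card (K \<inter> T)"
    by linarith
  moreover have "K \<inter> Y \<noteq> {}"
  proof -
    have "C \<inter> ((L - R) \<inter> Y) \<noteq> {}"
      using more[folded C_def] by (metis card.empty less_nat_zero_code)
    then show ?thesis unfolding K_def by blast
  qed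
  moreover have KT: "K \<inter> T = C \<inter> T"
    using component_of_subset[OF \<open>x \<in> W\<close>] unfolding K_def C_def W_def by blast
  with \<open>K \<inter> Y \<noteq> {}\<close> \<open>Y \<subseteq> T\<close> have "C \<inter> T \<noteq> {}" by blast
  then have "connected_set (torso_edges V E T) (K \<inter> T)"
    unfolding KT C_def by (rule connected_torso_component_of[OF g])
  moreover have "K \<subseteq> L - R" unfolding K_def by blast
  ultimately show ?thesis
    using NS by (intro that)
qed

lemma carvable_from_excess:
  assumes g: "graph V E" and "Y \<subseteq> T" and cut: "vertex_cut V E L R" and "X \<subseteq> R"
    and excess: "card ((L \<inter> R) - T) < card ((L - R) \<inter> Y)"
    and "int (card (L \<inter> R)) \<le> k'"
  shows "\<exists>y\<in>Y. carvable V E X T k' y"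
proof -
  obtain K where K: "K \<subseteq> L - R" "K \<inter> Y \<noteq> {}" and NS: "neighbourhood E K \<subseteq> L \<inter> R"
    and "card (neighbourhood E K - T) < card (K \<inter> T)"
    and "connected_set (torso_edges V E T) (K \<inter> T)"
    using component_with_excess_in_cut_side[OF g \<open>Y \<subseteq> T\<close> cut excess] by blast
  moreover obtain y where "y \<in> K" "y \<in> Y" using K(2) by blast
  moreover have "K \<subseteq> V" "X \<subseteq> V - K" "\<not> V \<subseteq> K \<union> neighbourhood E K"
    using cut K(1) NS \<open>X \<subseteq> R\<close> unfolding vertex_cut_def by auto
  moreover have "int (card (neighbourhood E K)) \<le> k'"
  proof -
    have "card (neighbourhood E K) \<le> card (L \<inter> R)"
      using NS g cut unfolding graph_def vertex_cut_def by (intro card_mono) (auto intro: finite_subset)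
    with assms(6) show ?thesis by linarith
  qed
  ultimately show ?thesis
    using carvable_of_neighbourhood_cut[OF g] by blast
qed

lemma carvable_of_unbalanced_cut:
  assumes g: "graph V E" and "X \<subseteq> Y" and "Y \<subseteq> T" and "X \<subseteq> V"
    and cut: "vertex_cut V E L R" and "int (card (L \<inter> R)) \<le> k"
    and "int (card (L \<inter> X)) \<le> q" and "q + k < int (card (L \<inter> Y))"
  shows "\<exists>y\<in>Y. carvable V E X T (q + k) y"
proof -
  define R' where "R' = R \<union> (L \<inter> X)"
  have "finite L" using g cut by (auto simp: graph_def vertex_cut_def intro: finite_subset)
  have size: "card (L \<inter> R') \<le> card (L \<inter> R) + card (L \<inter> X)"
    unfolding R'_def by (metis Int_Un_distrib Int_absorb Int_assoc card_Un_le)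
  have "card (L \<inter> Y) = card ((L \<inter> R') \<inter> Y) + card ((L - R') \<inter> Y)"
  proof -
    have "(L \<inter> Y) \<inter> R' = (L \<inter> R') \<inter> Y" "(L \<inter> Y) - R' = (L - R') \<inter> Y" by auto
    with card_Int_Diff[of "L \<inter> Y" R'] \<open>finite L\<close> show ?thesis by simp
  qed
  moreover have "card ((L \<inter> R') \<inter> Y) \<le> card ((L \<inter> R') \<inter> T)"
    using \<open>Y \<subseteq> T\<close> \<open>finite L\<close> by (intro card_mono) auto
  moreover have "card (L \<inter> R') = card ((L \<inter> R') \<inter> T) + card ((L \<inter> R') - T)"
    using \<open>finite L\<close> by (intro card_Int_Diff) simp
  ultimately have excess: "card ((L \<inter> R') - T) < card ((L - R') \<inter> Y)"
    using size assms(6-8) by linarith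
  have "vertex_cut V E L R'"
    unfolding vertex_cut_def
  proof (intro conjI)
    show "L - R' \<noteq> {}" using excess by (metis card.empty empty_Diff less_nat_zero_code Int_empty_left)
  qed (use cut \<open>X \<subseteq> V\<close> in \<open>auto simp: vertex_cut_def R'_def\<close>)
  moreover have "X \<subseteq> R'"
    using cut \<open>X \<subseteq> V\<close> unfolding vertex_cut_def R'_def by blast
  moreover have "int (card (L \<inter> R')) \<le> q + k"
    using size assms(6,7) by linarith
  ultimately show ?thesis
    using carvable_from_excess[OF g \<open>Y \<subseteq> T\<close>] excess by blast
qed

theorem lemma5p5:
  fixes V :: "'a set" and E :: "'a set set" and q k :: int and X Y T :: "'a set"
  assumes "graph V E"
    and "q \<ge> k"
    and "X \<subseteq> Y" and "Y \<subseteq> T" and "T \<subseteq> V"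
    and "unbreakable V E q k X"
    and "\<forall>v\<in>Y. \<not> carvable V E X T (q + k) v"
  shows "unbreakable V E (q + k) k Y"
  unfolding unbreakable_def
proof (intro allI impI)
  fix L R assume cut: "vertex_cut V E L R \<and> int (card (L \<inter> R)) \<le> k"
  have XV: "X \<subseteq> V" using assms(3-5) by blast
  show "int (card (L \<inter> Y)) \<le> q + k \<or> int (card (R \<inter> Y)) \<le> q + k"
  proof (rule ccontr)
    assume "\<not> ?thesis"
    then have big: "q + k < int (card (L \<inter> Y))" "q + k < int (card (R \<inter> Y))" by auto
    from assms(6) cut have "int (card (L \<inter> X)) \<le> q \<or> int (card (R \<inter> X)) \<le> q"
      unfolding unbreakable_def by blast
    then have "\<exists>y\<in>Y. carvable V E X T (q + k) y"
    proof
      assume "int (card (L \<inter> X)) \<le> q"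
      with cut big show ?thesis
        by (intro carvable_of_unbalanced_cut[OF assms(1,3,4) XV]) auto
    next
      assume "int (card (R \<inter> X)) \<le> q"
      with cut big show ?thesis
        by (intro carvable_of_unbalanced_cut[OF assms(1,3,4) XV vertex_cut_swap]) (auto simp: Int_commute)
    qed
    with assms(7) show False by blast
  qed
qed

end
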